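(* Let $\mathbb{L}/\mathbb{K}$ be a finite Galois extension with Galois group $G$ and let $\mathcal{A},\mathcal{B},\mathcal{C}\subseteq\mathbb{L}[G]$ be $\mathbb{L}$-linear codes with $\mathcal{B}\circ\mathcal{A}\subseteq\mathcal{C}^\perp$. Let $r=c+e$ with $c\in\mathcal{C}$, $e\in\mathbb{L}[G]$, and let $I=\mathrm{supp}(e)$. Then (1) $\mathcal{K}(r)=\mathcal{K}(e)$; (2) $\mathrm{Short}_I(\mathcal{A})\subseteq\mathcal{K}(e)$; (3) if $\mathrm{rk}_\mathbb{K}(e)<d(\mathcal{B}^\perp)$, then $\mathrm{Short}_I(\mathcal{A})=\mathcal{K}(e)$.
   Context: $\mathbb{L}[G]$ has composition product $(ag)\circ(bh)=(a\,g(b))(gh)$; $a=\sum a_gg$ acts on $\mathbb{L}$ as $x\mapsto\sum a_gg(x)$, with kernel $\ker(a)\subseteq\mathbb{L}$ and rank $\mathrm{rk}_\mathbb{K}(a)$. A code is an $\mathbb{L}$-subspace of $\mathbb{L}[G]$; its minimum distance $d(\mathcal{D})$ is the minimum of $\mathrm{rk}_\mathbb{K}(x)$ over nonzero $x\in\mathcal{D}$. $\langle\sum a_gg,\sum b_gg\rangle_{\mathbb{L}[G]}=\sum a_gb_g$ and $\mathcal{D}^\perp$ is the orthogonal for this form. $\mathcal{B}\circ\mathcal{A}=\mathrm{span}_\mathbb{L}\{b\circ a:a\in\mathcal{A},b\in\mathcal{B}\}$. The support $\mathrm{supp}(a)$ is the orthogonal of $\ker(a)$ in $\mathbb{L}$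 with respect to $(x,y)\mapsto\mathrm{Tr}_{\mathbb{L}/\mathbb{K}}(xy)$. For a $\mathbb{K}$-subspace $I\subseteq\mathbb{L}$, $\mathrm{Short}_I(\mathcal{A})=\{a\in\mathcal{A}: I\subseteq\ker(a)\}$. For $x\in\mathbb{L}[G]$, $\mathcal{K}(x)=\{a\in\mathcal{A}:\langle b\circ a,x\rangle_{\mathbb{L}[G]}=0\ \forall b\in\mathcal{B}\}$. *)

theory Defs
  imports Main "HOL-Library.Extended_Nat"
begin

text \<open>A finite Galois extension L/K with Galois group G is modelled as follows:
  L is the ambient field type 'l, G is a finite group (under composition) of field
  automorphisms of 'l, and K is the fixed field of G (Artin's theorem).\<close>

definition field_aut :: "('l::field \<Rightarrow> 'l) \<Rightarrow> bool" where
  "field_aut g \<longleftrightarrow> bij g \<and> (\<forall>x y. g (x + y) = g x + g y) \<and> (\<forall>x y. g (x * y) = g x * g y) \<and> g 1 = 1"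

definition aut_group :: "('l::field \<Rightarrow> 'l) set \<Rightarrow> bool" where
  "aut_group G \<longleftrightarrow> finite G \<and> id \<in> G \<and> (\<forall>g\<in>G. field_aut g) \<and>
     (\<forall>g\<in>G. \<forall>h\<in>G. g \<circ> h \<in> G) \<and> (\<forall>g\<in>G. inv g \<in> G)"

definition fixed_field :: "('l \<Rightarrow> 'l) set \<Rightarrow> 'l set" where
  "fixed_field G = {x. \<forall>g\<in>G. g x = x}"

text \<open>Elements of L[G]: functions G \<rightarrow> L (zero outside G).\<close>
type_synonym 'l skew = "('l \<Rightarrow> 'l) \<Rightarrow> 'l"

definition skew_alg :: "('l \<Rightarrow> 'l) set \<Rightarrow> ('l::zero) skew set" where
  "skew_alg G = {a. \<forall>g. g \<notin> G \<longrightarrow> a g = 0}"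

text \<open>Composition product: (a g) o (b h) = (a g(b)) (g h).\<close>
definition skew_comp :: "('l \<Rightarrow> 'l) set \<Rightarrow> 'l::field skew \<Rightarrow> 'l skew \<Rightarrow> 'l skew" where
  "skew_comp G b a = (\<lambda>h. \<Sum>g\<in>G. \<Sum>k\<in>G. if g \<circ> k = h then b g * g (a k) else 0)"

definition skew_eval :: "('l \<Rightarrow> 'l) set \<Rightarrow> 'l::field skew \<Rightarrow> 'l \<Rightarrow> 'l" where
  "skew_eval G a x = (\<Sum>g\<in>G. a g * g x)"

definition skew_ker :: "('l \<Rightarrow> 'l) set \<Rightarrow> 'l::field skew \<Rightarrow> 'l set" where
  "skew_ker G a = {x. skew_eval G a x = 0}"

definition kspan :: "'l::field set \<Rightarrow> 'l set \<Rightarrow> 'l set" where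
  "kspan K S = {x. \<exists>F c. finite F \<and> F \<subseteq> S \<and> (\<forall>v\<in>F. c v \<in> K) \<and> x = (\<Sum>v\<in>F. c v * v)}"

definition kdim :: "'l::field set \<Rightarrow> 'l set \<Rightarrow> nat" where
  "kdim K V = (LEAST n. \<exists>F. finite F \<and> F \<subseteq> V \<and> card F = n \<and> kspan K F = V)"

definition skew_rank :: "('l \<Rightarrow> 'l) set \<Rightarrow> 'l::field skew \<Rightarrow> nat" where
  "skew_rank G a = kdim (fixed_field G) (range (skew_eval G a))"

definition lcode :: "('l \<Rightarrow> 'l) set \<Rightarrow> 'l::field skew set \<Rightarrow> bool" where
  "lcode G D \<longleftrightarrow> D \<subseteq> skew_alg G \<and> (\<lambda>_. 0) \<in> D \<and>
     (\<forall>x\<in>D. \<forall>y\<in>D. (\<lambda>g. x g + y g) \<in> D) \<and> (\<forall>l. \<forall>x\<in>D. (\<lambda>g. l * x g) \<in> D)"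

text \<open>Minimum distance (infinity for the zero code).\<close>
definition min_dist :: "('l \<Rightarrow> 'l) set \<Rightarrow> 'l::field skew set \<Rightarrow> enat" where
  "min_dist G D = (INF x\<in>D - {\<lambda>_. 0}. enat (skew_rank G x))"

definition skew_inner :: "('l \<Rightarrow> 'l) set \<Rightarrow> 'l::field skew \<Rightarrow> 'l skew \<Rightarrow> 'l" where
  "skew_inner G a b = (\<Sum>g\<in>G. a g * b g)"

definition dual_code :: "('l \<Rightarrow> 'l) set \<Rightarrow> 'l::field skew set \<Rightarrow> 'l skew set" where
  "dual_code G D = {x \<in> skew_alg G. \<forall>y\<in>D. skew_inner G x y = 0}"

definition lspan :: "('l \<Rightarrow> 'l) set \<Rightarrow> 'l::field skew set \<Rightarrow> 'l skew set" where
  "lspan G S = {x. \<exists>F c. finite F \<and> F \<subseteq> S \<and> x = (\<lambda>g. \<Sum>v\<in>F. c v * v g)}"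

definition code_prod :: "('l \<Rightarrow> 'l) set \<Rightarrow> 'l::field skew set \<Rightarrow> 'l skew set \<Rightarrow> 'l skew set" where
  "code_prod G B A = lspan G {skew_comp G b a | a b. a \<in> A \<and> b \<in> B}"

definition trace :: "('l \<Rightarrow> 'l) set \<Rightarrow> 'l::field \<Rightarrow> 'l" where
  "trace G x = (\<Sum>g\<in>G. g x)"

definition skew_supp :: "('l \<Rightarrow> 'l) set \<Rightarrow> 'l::field skew \<Rightarrow> 'l set" where
  "skew_supp G a = {y. \<forall>x\<in>skew_ker G a. trace G (x * y) = 0}"

definition short_code :: "('l \<Rightarrow> 'l) set \<Rightarrow> 'l::field set \<Rightarrow> 'l skew set \<Rightarrow> 'l skew set" where
  "short_code G I A = {a\<in>A. I \<subseteq> skew_ker G a}"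

definition Kset :: "('l \<Rightarrow> 'l) set \<Rightarrow> 'l::field skew set \<Rightarrow> 'l skew set \<Rightarrow> 'l skew \<Rightarrow> 'l skew set" where
  "Kset G A B x = {a\<in>A. \<forall>b\<in>B. skew_inner G (skew_comp G b a) x = 0}"

end

theory Submission
  imports Defs "HOL-Library.Function_Algebras"
begin

text \<open>For a in L[G] let a* be its adjoint for the trace form, a*(v) = sum of inv g (a_g v) over
  g in G, so that Tr(a(u) v) = Tr(u a*(v)). The map e \<circ> a* is again given by an element of L[G],
  and \<langle>b \<circ> a, e\<rangle> = \<langle>b, e \<circ> a*\<rangle>. Hence a lies in K(e) iff e \<circ> a* lies in the dual of B,
  while by trace duality and Dedekind's independence of characters supp(e) \<subseteq> ker(a) iff e \<circ> a* = 0.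
  The image of e \<circ> a* lies in that of e, so its rank is at most rk(e); if rk(e) is below the minimum
  distance of the dual of B, membership in that dual therefore forces e \<circ> a* = 0. Comparing ranks
  needs L to be finite-dimensional over the fixed field, which is Artin's lemma. Part (1) is immediate
  since every b \<circ> a is orthogonal to C.\<close>

lemma field_aut_additive: "field_aut g \<Longrightarrow> additive g"
  by (simp add: additive_def field_aut_def)

lemma field_aut_zero: "field_aut g \<Longrightarrow> g 0 = 0"
  using additive.zero[OF field_aut_additive] .

lemma field_aut_add: "field_aut g \<Longrightarrow> g (x + y) = g x + g y"
  by (simp add: field_aut_def)

lemma field_aut_minus: "field_aut g \<Longrightarrow> g (- x) = - g x"
  using additive.minus[OF field_aut_additive] .

lemma field_aut_sum: "field_aut g \<Longrightarrow> g (sum f A) = (\<Sum>x\<in>A. g (f x))"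
  using additive.sum[OF field_aut_additive] .

lemma field_aut_mult: "field_aut g \<Longrightarrow> g (x * y) = g x * g y"
  by (simp add: field_aut_def)

lemma field_aut_one: "field_aut g \<Longrightarrow> g 1 = 1"
  by (simp add: field_aut_def)

lemma field_aut_inverse: "field_aut g \<Longrightarrow> g (inverse x) = inverse (g x)"
proof (cases "x = 0")
  case False
  assume g: "field_aut g"
  have "g x * g (inverse x) = 1"
    using g False by (simp add: field_aut_mult[symmetric] field_aut_one)
  then show ?thesis by (metis inverse_unique mult.commute)
qed (simp add: field_aut_zero)

lemma field_aut_apply_inv: "field_aut g \<Longrightarrow> g (inv g x) = x"
  by (meson bij_is_surj field_aut_def surj_f_inv_f)

lemma field_aut_inv_apply: "field_aut g \<Longrightarrow> inv g (g x) = x"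
  by (meson bij_is_inj field_aut_def inv_f_f)

lemma aut_group_finite: "aut_group G \<Longrightarrow> finite G"
  by (simp add: aut_group_def)

lemma aut_group_id: "aut_group G \<Longrightarrow> id \<in> G"
  by (simp add: aut_group_def)

lemma aut_group_field_aut: "aut_group G \<Longrightarrow> g \<in> G \<Longrightarrow> field_aut g"
  by (simp add: aut_group_def)

lemma aut_group_comp: "aut_group G \<Longrightarrow> g \<in> G \<Longrightarrow> h \<in> G \<Longrightarrow> g \<circ> h \<in> G"
  by (simp add: aut_group_def)

lemma aut_group_inv: "aut_group G \<Longrightarrow> g \<in> G \<Longrightarrow> inv g \<in> G"
  by (simp add: aut_group_def)

lemma aut_group_sum_comp_right:
  assumes G: "aut_group G" and k: "k \<in> G"
  shows "(\<Sum>h\<in>G. f (h \<circ> k)) = (\<Sum>h\<in>G. f h)"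
proof (rule sum.reindex_bij_witness[of _ "\<lambda>m. m \<circ> inv k" "\<lambda>g. g \<circ> k"])
  have "field_aut k" using G k by (rule aut_group_field_aut)
  then have "(g \<circ> inv k) \<circ> k = g" "(g \<circ> k) \<circ> inv k = g" for g
    by (simp_all add: fun_eq_iff field_aut_apply_inv field_aut_inv_apply)
  then show "a \<circ> inv k \<circ> k = a" "a \<circ> inv k \<in> G" "a \<circ> k \<in> G" "a \<circ> k \<circ> inv k = a" if "a \<in> G" for a
    using that G k by (auto simp: aut_group_comp aut_group_inv)
qed auto

lemma dedekind_independence:
  assumes "finite S" "\<forall>g\<in>S. field_aut g" "\<forall>x. (\<Sum>g\<in>S. c g * g x) = 0"
  shows "\<forall>g\<in>S. c g = (0::'l::field)"
  using assms
proof (induction S arbitrary: c rule: finite_induct)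
  case empty then show ?case by simp
next
  case (insert h S)
  have fh: "field_aut h" and fS: "\<forall>g\<in>S. field_aut g" using insert.prems(1) by auto
  have rest: "(\<Sum>g\<in>S. c g * g x) = - (c h * h x)" for x
    using insert.prems(2)[rule_format, of x] insert.hyps by (simp add: eq_neg_iff_add_eq_0 add.commute)
  have shifted: "c g * (g y - h y) = 0" if "g \<in> S" for g y
  proof -
    \<comment> \<open>the relation for the argument y x minus h(y) times the relation for x eliminates h\<close>
    have "(\<Sum>g\<in>S. (c g * (g y - h y)) * g x) = 0" for x
    proof -
      have "(\<Sum>g\<in>S. (c g * (g y - h y)) * g x) = (\<Sum>g\<in>S. c g * g (y * x)) - h y * (\<Sum>g\<in>S. c g * g x)"
        using fS by (simp add: sum_distrib_left sum_subtractf[symmetric] field_aut_mult algebra_simps)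
      then show ?thesis using fh by (simp add: rest field_aut_mult)
    qed
    then show ?thesis using insert.IH[of "\<lambda>g. c g * (g y - h y)"] fS that by auto
  qed
  have cS: "c g = 0" if "g \<in> S" for g
  proof -
    have "g \<noteq> h" using that insert.hyps by auto
    then obtain y where "g y \<noteq> h y" by (meson ext)
    then show ?thesis using shifted[OF that, of y] by simp
  qed
  have "c h = 0" using rest[of 1] cS fh by (simp add: field_aut_one)
  then show ?case using cS by auto
qed

lemma aut_group_coeffs_eq_0:
  assumes "aut_group G" "\<forall>x. (\<Sum>g\<in>G. c g * g x) = 0" "g \<in> G"
  shows "c g = (0::'l::field)"
  using dedekind_independence[of G c] assms aut_group_finite aut_group_field_aut by blast

lemma trace_zero: "aut_group G \<Longrightarrow> trace G 0 = 0"
  by (simp add: trace_def aut_group_field_aut field_aut_zero)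

lemma trace_nondegenerate:
  assumes G: "aut_group G" and z: "\<forall>v. trace G (z * v) = 0"
  shows "z = 0"
proof (rule ccontr)
  assume nz: "z \<noteq> 0"
  have "\<exists>x. trace G x \<noteq> 0"
  proof (rule ccontr)
    assume "\<not> ?thesis"
    then have "\<forall>x. (\<Sum>g\<in>G. 1 * g x) = 0" by (simp add: trace_def)
    from aut_group_coeffs_eq_0[OF G this aut_group_id[OF G]] show False by simp
  qed
  then obtain x where "trace G x \<noteq> 0" by blast
  moreover have "z * (x / z) = x" using nz by simp
  ultimately show False using z by metis
qed

definition is_subfield :: "'l::field set \<Rightarrow> bool" where
  "is_subfield K \<longleftrightarrow> 0 \<in> K \<and> 1 \<in> K \<and> (\<forall>x\<in>K. \<forall>y\<in>K. x + y \<in> K \<and> x * y \<in> K) \<and>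
     (\<forall>x\<in>K. - x \<in> K \<and> inverse x \<in> K)"

definition is_ksubspace :: "'l::field set \<Rightarrow> 'l set \<Rightarrow> bool" where
  "is_ksubspace K V \<longleftrightarrow> 0 \<in> V \<and> (\<forall>x\<in>V. \<forall>y\<in>V. x + y \<in> V) \<and> (\<forall>k\<in>K. \<forall>x\<in>V. k * x \<in> V)"

lemma fixed_field_is_subfield: "aut_group G \<Longrightarrow> is_subfield (fixed_field G)"
  unfolding is_subfield_def fixed_field_def
  by (auto dest: aut_group_field_aut simp: field_aut_zero field_aut_one field_aut_minus field_aut_inverse)
    (metis aut_group_field_aut field_aut_add field_aut_mult)+

lemma ksubspace_diff:
  assumes "is_subfield K" "is_ksubspace K V" "x \<in> V" "y \<in> V" "k \<in> K"
  shows "x - k * y \<in> V"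
  using assms unfolding is_subfield_def is_ksubspace_def
  by (metis diff_conv_add_uminus minus_mult_left)

lemma ksubspace_Int: "is_ksubspace K V \<Longrightarrow> is_ksubspace K W \<Longrightarrow> is_ksubspace K (V \<inter> W)"
  by (simp add: is_ksubspace_def)

lemma ksubspace_sum:
  assumes V: "is_ksubspace K V" and S: "finite S" "S \<subseteq> V" and c: "\<forall>v\<in>S. c v \<in> K"
  shows "(\<Sum>v\<in>S. c v * v) \<in> V"
  using S c by (induction S rule: finite_induct) (use V in \<open>auto simp: is_ksubspace_def\<close>)

lemma kspan_finite_iff:
  assumes K: "is_subfield K" and S: "finite S"
  shows "x \<in> kspan K S \<longleftrightarrow> (\<exists>c. (\<forall>v\<in>S. c v \<in> K) \<and> x = (\<Sum>v\<in>S. c v * v))"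
proof
  assume "x \<in> kspan K S"
  then obtain F c where F: "finite F" "F \<subseteq> S" "\<forall>v\<in>F. c v \<in> K" "x = (\<Sum>v\<in>F. c v * v)"
    by (auto simp: kspan_def)
  let ?c = "\<lambda>v. if v \<in> F then c v else 0"
  have "(\<Sum>v\<in>S. ?c v * v) = (\<Sum>v\<in>F. ?c v * v)"
    by (rule sum.mono_neutral_right) (use S F in auto)
  then show "\<exists>c. (\<forall>v\<in>S. c v \<in> K) \<and> x = (\<Sum>v\<in>S. c v * v)"
    using F K by (intro exI[of _ ?c]) (auto simp: is_subfield_def)
qed (use S in \<open>auto simp: kspan_def\<close>)

lemma kspan_empty: "is_subfield K \<Longrightarrow> kspan K {} = {0}"
  using kspan_finite_iff[of K "{}"] by auto

lemma kspan_ksubspace: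
  assumes K: "is_subfield K" and S: "finite S"
  shows "is_ksubspace K (kspan K S)"
proof -
  note span = kspan_finite_iff[OF K S]
  have "0 \<in> kspan K S"
    unfolding span using K by (intro exI[of _ "\<lambda>_. 0"]) (simp add: is_subfield_def)
  moreover have "x + y \<in> kspan K S" if xy: "x \<in> kspan K S" "y \<in> kspan K S" for x y
  proof -
    obtain c d where "\<forall>v\<in>S. c v \<in> K" "x = (\<Sum>v\<in>S. c v * v)" "\<forall>v\<in>S. d v \<in> K" "y = (\<Sum>v\<in>S. d v * v)"
      using xy span by meson
    then show ?thesis
      unfolding span using K by (auto intro!: exI[of _ "\<lambda>v. c v + d v"] simp: is_subfield_def sum.distrib algebra_simps)
  qed
  moreover have "k * x \<in> kspan K S" if kx: "k \<in> K" "x \<in> kspan K S" for k x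
  proof -
    obtain c where "\<forall>v\<in>S. c v \<in> K" "x = (\<Sum>v\<in>S. c v * v)" using kx span by auto
    then show ?thesis
      unfolding span using K kx by (auto intro!: exI[of _ "\<lambda>v. k * c v"] simp: is_subfield_def sum_distrib_left algebra_simps)
  qed
  ultimately show ?thesis by (simp add: is_ksubspace_def)
qed

lemma kspan_subset_ksubspace:
  assumes "is_subfield K" "finite S" "is_ksubspace K V" "S \<subseteq> V"
  shows "kspan K S \<subseteq> V"
  using ksubspace_sum[OF assms(3,2,4)] kspan_finite_iff[OF assms(1,2)] by auto

lemma kspan_insert_decompose:
  assumes K: "is_subfield K" and S: "finite S" "f \<notin> S" and x: "x \<in> kspan K (insert f S)"
  shows "\<exists>c\<in>K. x - c * f \<in> kspan K S"
proof -
  obtain c where c: "\<forall>v\<in>insert f S. c v \<in> K" "x = (\<Sum>v\<in>insert f S. c v * v)"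
    using x kspan_finite_iff[OF K] S by (meson finite_insert)
  then have "x - c f * f = (\<Sum>v\<in>S. c v * v)" using S by simp
  then show ?thesis using c kspan_finite_iff[OF K S(1)] by auto
qed

lemma kspan_insert_intro:
  assumes K: "is_subfield K" and S: "finite S" "v \<notin> S" and y: "y \<in> kspan K S" and k: "k \<in> K"
  shows "y + k * v \<in> kspan K (insert v S)"
proof -
  obtain c where c: "\<forall>v\<in>S. c v \<in> K" "y = (\<Sum>v\<in>S. c v * v)"
    using y kspan_finite_iff[OF K S(1)] by auto
  have "(\<Sum>u\<in>S. (c(v := k)) u * u) = (\<Sum>u\<in>S. c u * u)" using S by (intro sum.cong) auto
  then have "y + k * v = (\<Sum>u\<in>insert v S. (c(v := k)) u * u)" using c S by simp
  moreover have "\<forall>u\<in>insert v S. (c(v := k)) u \<in> K" using c k by auto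
  ultimately show ?thesis using kspan_finite_iff[OF K] S by (meson finite_insert)
qed

text \<open>Exchange argument by induction on the spanning set F: either V already lies in the span of
  F minus f, or a vector v of V involving f replaces f.\<close>

lemma ksubspace_of_finite_span:
  assumes K: "is_subfield K" and F: "finite F"
  shows "is_ksubspace K V \<Longrightarrow> V \<subseteq> kspan K F \<Longrightarrow>
    \<exists>F'. finite F' \<and> F' \<subseteq> V \<and> card F' \<le> card F \<and> kspan K F' = V"
  using F
proof (induction F arbitrary: V rule: finite_induct)
  case empty
  then have "V = {0}" using kspan_empty[OF K] by (auto simp: is_ksubspace_def)
  then show ?case using kspan_empty[OF K] by (intro exI[of _ "{}"]) auto
next
  case (insert f F0)
  let ?V0 = "V \<inter> kspan K F0"
  have "is_ksubspace K ?V0"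
    using ksubspace_Int insert.prems kspan_ksubspace[OF K insert.hyps(1)] by blast
  then obtain F0' where F0': "finite F0'" "F0' \<subseteq> ?V0" "card F0' \<le> card F0" "kspan K F0' = ?V0"
    using insert.IH by blast
  show ?case
  proof (cases "V \<subseteq> kspan K F0")
    case True
    then show ?thesis using F0' insert.hyps by (intro exI[of _ F0']) auto
  next
    case False
    then obtain v where v: "v \<in> V" "v \<notin> kspan K F0" by blast
    obtain c where c: "c \<in> K" "v - c * f \<in> kspan K F0"
      using kspan_insert_decompose[OF K insert.hyps] v insert.prems(2) by blast
    have "c \<noteq> 0" using c v by auto
    have vF0': "v \<notin> F0'" using F0' v by auto
    have "V \<subseteq> kspan K (insert v F0')"
    proof
      fix x assume x: "x \<in> V"
      obtain d where d: "d \<in> K" "x - d * f \<in> kspan K F0"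
        using kspan_insert_decompose[OF K insert.hyps] x insert.prems(2) by blast
      define q where "q = d * inverse c"
      have q: "q \<in> K" using d c K by (simp add: q_def is_subfield_def)
      have "x - q * v = (x - d * f) - q * (v - c * f)"
        using \<open>c \<noteq> 0\<close> by (simp add: q_def algebra_simps)
      also have "\<dots> \<in> kspan K F0"
        using ksubspace_diff[OF K kspan_ksubspace[OF K insert.hyps(1)]] d c q by blast
      finally have "x - q * v \<in> kspan K F0'"
        using ksubspace_diff[OF K insert.prems(1) x v(1) q] F0'(4) by blast
      from kspan_insert_intro[OF K F0'(1) vF0' this q] show "x \<in> kspan K (insert v F0')" by simp
    qed
    moreover have "kspan K (insert v F0') \<subseteq> V"
      using kspan_subset_ksubspace[OF K _ insert.prems(1)] F0' v by auto
    moreover have "card (insert v F0') \<le> card (insert f F0)" using F0' vF0' insert.hyps by simp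
    ultimately show ?thesis using F0' v by (intro exI[of _ "insert v F0'"]) auto
  qed
qed

lemma kdim_mono:
  assumes K: "is_subfield K" and X: "finite X" and W: "is_ksubspace K W" "W \<subseteq> kspan K X"
    and V: "is_ksubspace K V" "V \<subseteq> W"
  shows "kdim K V \<le> kdim K W"
proof -
  let ?P = "\<lambda>W n. \<exists>F. finite F \<and> F \<subseteq> W \<and> card F = n \<and> kspan K F = W"
  have "\<exists>n. ?P W n" using ksubspace_of_finite_span[OF K X W] by blast
  then have "?P W (kdim K W)" unfolding kdim_def by (rule LeastI_ex)
  then obtain FW where FW: "finite FW" "card FW = kdim K W" "kspan K FW = W" by blast
  obtain F' where F': "finite F'" "F' \<subseteq> V" "card F' \<le> card FW" "kspan K F' = V"
    using ksubspace_of_finite_span[OF K FW(1) V(1)] V(2) FW(3) by blast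
  have "kdim K V \<le> card F'" unfolding kdim_def by (rule Least_le) (use F' in blast)
  then show ?thesis using F' FW by simp
qed

lemma sum_fun_apply: "(\<Sum>x\<in>A. f x) g = (\<Sum>x\<in>A. (f x g :: 'b::comm_monoid_add))"
  by (induct A rule: infinite_finite_induct) (simp_all add: plus_fun_def zero_fun_def)

interpretation skew_vs: vector_space "\<lambda>(c::'l::field) (f::'l skew). (\<lambda>g. c * f g)"
  by unfold_locales (auto simp: fun_eq_iff algebra_simps plus_fun_def)

definition galois_orbit :: "('l \<Rightarrow> 'l) set \<Rightarrow> 'l::field \<Rightarrow> 'l skew" where
  "galois_orbit G x = (\<lambda>g. if g \<in> G then g x else 0)"

lemma inj_galois_orbit: "aut_group G \<Longrightarrow> inj (galois_orbit G)"
  by (rule injI) (metis aut_group_id galois_orbit_def id_apply)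

lemma galois_orbit_finite_span:
  fixes G :: "('l::field \<Rightarrow> 'l) set"
  assumes G: "aut_group G"
  shows "\<exists>T. finite T \<and> range (galois_orbit G) \<subseteq> skew_vs.span T"
proof -
  define \<delta> where "\<delta> h = (\<lambda>g. if g = h then 1 else 0 :: 'l)" for h :: "'l \<Rightarrow> 'l"
  have expand: "galois_orbit G x = (\<Sum>h\<in>G. (\<lambda>g. h x * \<delta> h g))" for x
  proof
    fix g
    have "(\<Sum>h\<in>G. h x * \<delta> h g) = (\<Sum>h\<in>G. if g = h then g x else 0)"
      by (intro sum.cong) (auto simp: \<delta>_def)
    then show "galois_orbit G x g = (\<Sum>h\<in>G. (\<lambda>g. h x * \<delta> h g)) g"
      using aut_group_finite[OF G] by (simp add: sum_fun_apply galois_orbit_def)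
  qed
  have "galois_orbit G x \<in> skew_vs.span (\<delta> ` G)" for x
    by (subst expand) (intro skew_vs.span_sum skew_vs.span_scale skew_vs.span_base imageI)
  then show ?thesis using aut_group_finite[OF G] by blast
qed

lemma galois_orbit_relation_twist:
  assumes G: "aut_group G" and h: "h \<in> G" and B: "B \<subseteq> range (galois_orbit G)"
    and u: "galois_orbit G y = (\<Sum>v\<in>B. (\<lambda>g. u v * v g))"
  shows "galois_orbit G y = (\<Sum>v\<in>B. (\<lambda>g. h (u v) * v g))"
proof (rule ext)
  fix g
  have fh: "field_aut h" using G h by (rule aut_group_field_aut)
  show "galois_orbit G y g = (\<Sum>v\<in>B. (\<lambda>g. h (u v) * v g)) g"
  proof (cases "g \<in> G")
    case False
    then have "v g = 0" if "v \<in> B" for v using that B by (auto simp: galois_orbit_def)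
    then show ?thesis using False by (simp add: sum_fun_apply galois_orbit_def sum.neutral)
  next
    case True
    define g0 where "g0 = inv h \<circ> g"
    have g0: "g0 \<in> G" using G h True by (simp add: g0_def aut_group_comp aut_group_inv)
    have hg0: "h (g0 z) = g z" for z using fh by (simp add: g0_def field_aut_apply_inv)
    have "v g = h (v g0)" if "v \<in> B" for v
      using that B g0 True by (auto simp: galois_orbit_def hg0)
    moreover have "g0 y = (\<Sum>v\<in>B. u v * v g0)"
      using fun_cong[OF u, of g0] g0 by (simp add: galois_orbit_def sum_fun_apply)
    then have "g y = (\<Sum>v\<in>B. h (u v) * h (v g0))"
      using fh by (simp add: field_aut_sum field_aut_mult flip: hg0)
    ultimately show ?thesis using True by (simp add: galois_orbit_def sum_fun_apply)
  qed
qed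

text \<open>Artin's lemma: the coordinates of y with respect to a maximal independent set of Galois
  orbits are G-invariant, hence lie in the fixed field.\<close>

lemma fixed_field_finite_span:
  assumes G: "aut_group G"
  shows "\<exists>X. finite X \<and> (\<forall>y. y \<in> kspan (fixed_field G) X)"
proof -
  let ?\<phi> = "galois_orbit G"
  obtain T where T: "finite T" "range ?\<phi> \<subseteq> skew_vs.span T"
    using galois_orbit_finite_span[OF G] by blast
  obtain B where B: "B \<subseteq> range ?\<phi>" "skew_vs.independent B" "range ?\<phi> \<subseteq> skew_vs.span B"
    using skew_vs.maximal_independent_subset by blast
  have fB: "finite B" using skew_vs.independent_span_bound[OF T(1) B(2)] B(1) T(2) by blast
  define X where "X = ?\<phi> -` B"
  have BX: "B = ?\<phi> ` X" using B(1) by (auto simp: X_def)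
  have inj: "inj ?\<phi>" using G by (rule inj_galois_orbit)
  have fX: "finite X" using fB inj by (simp add: X_def finite_vimageI)
  have "y \<in> kspan (fixed_field G) X" for y
  proof -
    obtain u where u: "?\<phi> y = (\<Sum>v\<in>B. (\<lambda>g. u v * v g))"
      using B(3) skew_vs.span_finite[OF fB] by blast
    have fixed: "h (u v) = u v" if "h \<in> G" "v \<in> B" for h v
    proof -
      have "(\<Sum>v\<in>B. (\<lambda>g. (u v - h (u v)) * v g)) = 0"
        using u galois_orbit_relation_twist[OF G that(1) B(1) u]
        by (simp add: fun_eq_iff sum_fun_apply algebra_simps sum_subtractf)
      then show ?thesis
        using skew_vs.independent_explicit_finite_subsets[THEN iffD1, OF B(2), rule_format,
            OF order_refl fB, of "\<lambda>v. u v - h (u v)"] that(2)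
        by simp
    qed
    have "y = ?\<phi> y id" using aut_group_id[OF G] by (simp add: galois_orbit_def)
    also have "\<dots> = (\<Sum>x\<in>X. u (?\<phi> x) * ?\<phi> x id)"
      unfolding u sum_fun_apply BX using inj by (simp add: sum.reindex inj_on_subset)
    also have "\<dots> = (\<Sum>x\<in>X. u (?\<phi> x) * x)" using aut_group_id[OF G] by (simp add: galois_orbit_def)
    finally show ?thesis
      unfolding kspan_finite_iff[OF fixed_field_is_subfield[OF G] fX]
      using fixed BX by (intro exI[of _ "\<lambda>x. u (?\<phi> x)"]) (auto simp: fixed_field_def)
  qed
  then show ?thesis using fX by blast
qed

definition skew_adj :: "('l \<Rightarrow> 'l) set \<Rightarrow> 'l::field skew \<Rightarrow> 'l \<Rightarrow> 'l" where
  "skew_adj G a v = (\<Sum>g\<in>G. inv g (a g * v))"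

text \<open>The element of L[G] acting as e \<circ> a*, where a* = skew_adj G a.\<close>

definition skew_comp_adj :: "('l \<Rightarrow> 'l) set \<Rightarrow> 'l::field skew \<Rightarrow> 'l skew \<Rightarrow> 'l skew" where
  "skew_comp_adj G e a = (\<lambda>g. if g \<in> G then (\<Sum>k\<in>G. g (a k) * e (g \<circ> k)) else 0)"

lemma trace_skew_eval_adj:
  assumes G: "aut_group G"
  shows "trace G (skew_eval G a u * v) = trace G (u * skew_adj G a v)"
proof -
  have fa: "\<And>h. h \<in> G \<Longrightarrow> field_aut h" using G by (rule aut_group_field_aut)
  have "trace G (skew_eval G a u * v) = (\<Sum>g\<in>G. \<Sum>h\<in>G. h (a g * g u * v))"
    unfolding trace_def skew_eval_def sum_distrib_right
    by (subst sum.swap) (intro sum.cong refl, simp add: fa field_aut_sum)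
  also have "\<dots> = (\<Sum>g\<in>G. \<Sum>h\<in>G. h (u * inv g (a g * v)))"
  proof (rule sum.cong[OF refl])
    fix g assume g: "g \<in> G"
    have "(\<Sum>h\<in>G. h (u * inv g (a g * v))) = (\<Sum>h\<in>G. (h \<circ> g) (u * inv g (a g * v)))"
      using aut_group_sum_comp_right[OF G g, of "\<lambda>h. h (u * inv g (a g * v))"] by simp
    also have "\<dots> = (\<Sum>h\<in>G. h (a g * g u * v))"
      using fa[OF g] by (intro sum.cong refl) (simp add: field_aut_mult field_aut_apply_inv algebra_simps)
    finally show "(\<Sum>h\<in>G. h (a g * g u * v)) = (\<Sum>h\<in>G. h (u * inv g (a g * v)))" by simp
  qed
  also have "\<dots> = trace G (u * skew_adj G a v)"
    unfolding trace_def skew_adj_def sum_distrib_left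
    by (subst sum.swap) (intro sum.cong refl, simp add: fa field_aut_sum)
  finally show ?thesis .
qed

lemma skew_eval_comp_adj:
  assumes G: "aut_group G"
  shows "skew_eval G (skew_comp_adj G e a) x = skew_eval G e (skew_adj G a x)"
proof -
  have fa: "\<And>h. h \<in> G \<Longrightarrow> field_aut h" using G by (rule aut_group_field_aut)
  have "skew_eval G e (skew_adj G a x) = (\<Sum>k\<in>G. \<Sum>m\<in>G. e m * m (inv k (a k * x)))"
    unfolding skew_eval_def skew_adj_def
    by (subst sum.swap) (intro sum.cong refl, simp add: fa field_aut_sum sum_distrib_left)
  also have "\<dots> = (\<Sum>k\<in>G. \<Sum>g\<in>G. g (a k) * e (g \<circ> k) * g x)"
  proof (rule sum.cong[OF refl])
    fix k assume k: "k \<in> G"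
    have "(\<Sum>m\<in>G. e m * m (inv k (a k * x))) = (\<Sum>g\<in>G. e (g \<circ> k) * (g \<circ> k) (inv k (a k * x)))"
      using aut_group_sum_comp_right[OF G k, of "\<lambda>m. e m * m (inv k (a k * x))"] by simp
    also have "\<dots> = (\<Sum>g\<in>G. g (a k) * e (g \<circ> k) * g x)"
      using fa[OF k] fa by (intro sum.cong refl) (simp add: field_aut_mult field_aut_apply_inv algebra_simps)
    finally show "(\<Sum>m\<in>G. e m * m (inv k (a k * x))) = (\<Sum>g\<in>G. g (a k) * e (g \<circ> k) * g x)" .
  qed
  also have "\<dots> = skew_eval G (skew_comp_adj G e a) x"
    unfolding skew_eval_def skew_comp_adj_def by (subst sum.swap) (simp add: sum_distrib_right)
  finally show ?thesis by simp
qed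

lemma skew_inner_comp:
  assumes G: "aut_group G"
  shows "skew_inner G (skew_comp G b a) e = skew_inner G b (skew_comp_adj G e a)"
proof -
  have "skew_inner G (skew_comp G b a) e
      = (\<Sum>h\<in>G. \<Sum>g\<in>G. \<Sum>k\<in>G. if g \<circ> k = h then b g * g (a k) * e h else 0)"
    unfolding skew_inner_def skew_comp_def sum_distrib_right
    by (intro sum.cong refl) (simp add: if_distrib)
  also have "\<dots> = (\<Sum>g\<in>G. \<Sum>k\<in>G. \<Sum>h\<in>G. if g \<circ> k = h then b g * g (a k) * e h else 0)"
    by (rule trans[OF sum.swap], rule sum.cong[OF refl], rule sum.swap)
  also have "\<dots> = (\<Sum>g\<in>G. \<Sum>k\<in>G. b g * g (a k) * e (g \<circ> k))"
    using aut_group_finite[OF G] aut_group_comp[OF G] by (intro sum.cong refl) simp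
  also have "\<dots> = skew_inner G b (skew_comp_adj G e a)"
    unfolding skew_inner_def skew_comp_adj_def
    by (intro sum.cong refl) (simp add: sum_distrib_left algebra_simps)
  finally show ?thesis .
qed

lemma skew_adj_in_supp:
  assumes G: "aut_group G"
  shows "skew_adj G e v \<in> skew_supp G e"
  using trace_skew_eval_adj[OF G, of e _ v, symmetric] trace_zero[OF G]
  by (auto simp: skew_supp_def skew_ker_def)

lemma supp_subset_ker_iff:
  assumes G: "aut_group G"
  shows "skew_supp G e \<subseteq> skew_ker G a \<longleftrightarrow> (\<forall>x. skew_eval G e (skew_adj G a x) = 0)"
proof
  assume supp: "skew_supp G e \<subseteq> skew_ker G a"
  show "\<forall>x. skew_eval G e (skew_adj G a x) = 0"
  proof (intro allI, rule trace_nondegenerate[OF G], rule allI)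
    fix x v
    have "trace G (skew_eval G e (skew_adj G a x) * v) = trace G (skew_adj G a x * skew_adj G e v)"
      by (rule trace_skew_eval_adj[OF G])
    also have "\<dots> = trace G (skew_eval G a (skew_adj G e v) * x)"
      by (subst trace_skew_eval_adj[OF G]) (simp add: mult.commute)
    also have "skew_eval G a (skew_adj G e v) = 0"
      using supp skew_adj_in_supp[OF G] by (auto simp: skew_ker_def)
    finally show "trace G (skew_eval G e (skew_adj G a x) * v) = 0" by (simp add: trace_zero[OF G])
  qed
next
  assume ker: "\<forall>x. skew_eval G e (skew_adj G a x) = 0"
  show "skew_supp G e \<subseteq> skew_ker G a"
  proof
    fix y assume y: "y \<in> skew_supp G e"
    have "skew_eval G a y = 0"
    proof (rule trace_nondegenerate[OF G], rule allI)
      fix v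
      have "trace G (skew_eval G a y * v) = trace G (y * skew_adj G a v)"
        by (rule trace_skew_eval_adj[OF G])
      then show "trace G (skew_eval G a y * v) = 0"
        using y ker by (auto simp: skew_supp_def skew_ker_def mult.commute)
    qed
    then show "y \<in> skew_ker G a" by (simp add: skew_ker_def)
  qed
qed

lemma skew_comp_adj_eq_0_iff:
  assumes G: "aut_group G"
  shows "skew_comp_adj G e a = (\<lambda>_. 0) \<longleftrightarrow> skew_supp G e \<subseteq> skew_ker G a"
proof -
  have "skew_comp_adj G e a = (\<lambda>_. 0) \<longleftrightarrow> (\<forall>x. skew_eval G (skew_comp_adj G e a) x = 0)"
    using aut_group_coeffs_eq_0[OF G, of "skew_comp_adj G e a"]
    by (auto simp: fun_eq_iff skew_eval_def skew_comp_adj_def)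
  then show ?thesis by (simp add: supp_subset_ker_iff[OF G] skew_eval_comp_adj[OF G])
qed

lemma range_skew_eval_ksubspace:
  assumes G: "aut_group G"
  shows "is_ksubspace (fixed_field G) (range (skew_eval G a))"
proof -
  have fa: "\<And>h. h \<in> G \<Longrightarrow> field_aut h" using G by (rule aut_group_field_aut)
  have "skew_eval G a 0 = 0" by (simp add: skew_eval_def fa field_aut_zero)
  moreover have "skew_eval G a x + skew_eval G a y = skew_eval G a (x + y)" for x y
    by (simp add: skew_eval_def fa field_aut_add sum.distrib algebra_simps)
  moreover have "k * skew_eval G a x = skew_eval G a (k * x)" if "k \<in> fixed_field G" for k x
    unfolding skew_eval_def sum_distrib_left
    using that by (intro sum.cong refl) (auto simp: fa field_aut_mult fixed_field_def)
  ultimately show ?thesis unfolding is_ksubspace_def by (auto simp del: range_eq_singletonD)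
qed

lemma skew_rank_comp_adj_le:
  assumes G: "aut_group G"
  shows "skew_rank G (skew_comp_adj G e a) \<le> skew_rank G e"
proof -
  obtain X where "finite X" "\<forall>y. y \<in> kspan (fixed_field G) X"
    using fixed_field_finite_span[OF G] by blast
  moreover have "range (skew_eval G (skew_comp_adj G e a)) \<subseteq> range (skew_eval G e)"
    using skew_eval_comp_adj[OF G] by auto
  ultimately show ?thesis
    unfolding skew_rank_def
    by (intro kdim_mono fixed_field_is_subfield range_skew_eval_ksubspace G) auto
qed

lemma skew_comp_adj_in_skew_alg: "skew_comp_adj G e a \<in> skew_alg G"
  by (simp add: skew_alg_def skew_comp_adj_def)

lemma zero_in_dual_code: "(\<lambda>_. 0) \<in> dual_code G D"
  by (simp add: dual_code_def skew_alg_def skew_inner_def)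

lemma eq_0_if_rank_less_min_dist:
  assumes "x \<in> D" "enat (skew_rank G x) < min_dist G D"
  shows "x = (\<lambda>_. 0)"
proof (rule ccontr)
  assume "x \<noteq> (\<lambda>_. 0)"
  then have "min_dist G D \<le> enat (skew_rank G x)"
    unfolding min_dist_def using assms(1) by (intro INF_lower) auto
  then show False using assms(2) by simp
qed

lemma skew_comp_in_code_prod: "a \<in> A \<Longrightarrow> b \<in> B \<Longrightarrow> skew_comp G b a \<in> code_prod G B A"
  unfolding code_prod_def lspan_def
  by (intro CollectI exI[of _ "{skew_comp G b a}"] exI[of _ "\<lambda>_. 1"]) auto

lemma Kset_add_orthogonal:
  assumes "code_prod G B A \<subseteq> dual_code G C" and "c \<in> C"
  shows "Kset G A B (\<lambda>g. c g + e g) = Kset G A B e"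
proof -
  have "skew_inner G (skew_comp G b a) c = 0" if "a \<in> A" "b \<in> B" for a b
    using skew_comp_in_code_prod[OF that] assms by (auto simp: dual_code_def)
  then show ?thesis
    unfolding Kset_def by (auto simp: skew_inner_def distrib_left sum.distrib)
qed

lemma Kset_iff:
  assumes "aut_group G"
  shows "a \<in> Kset G A B e \<longleftrightarrow> a \<in> A \<and> skew_comp_adj G e a \<in> dual_code G B"
proof -
  have "skew_inner G (skew_comp G b a) e = skew_inner G (skew_comp_adj G e a) b" for b
    unfolding skew_inner_comp[OF assms] by (simp add: skew_inner_def mult.commute)
  then show ?thesis by (simp add: Kset_def dual_code_def skew_comp_adj_in_skew_alg)
qed

lemma short_code_supp_iff:
  assumes "aut_group G"
  shows "a \<in> short_code G (skew_supp G e) A \<longleftrightarrow> a \<in> A \<and> skew_comp_adj G e a = (\<lambda>_. 0)"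
  by (simp add: short_code_def skew_comp_adj_eq_0_iff[OF assms])

theorem mainTheorem11:
  fixes G :: "('l::field \<Rightarrow> 'l) set"
    and A B C :: "'l skew set"
    and c e :: "'l skew"
  assumes "aut_group G"
    and "lcode G A" and "lcode G B" and "lcode G C"
    and "code_prod G B A \<subseteq> dual_code G C"
    and "c \<in> C" and "e \<in> skew_alg G"
  shows "Kset G A B (\<lambda>g. c g + e g) = Kset G A B e
    \<and> short_code G (skew_supp G e) A \<subseteq> Kset G A B e
    \<and> (enat (skew_rank G e) < min_dist G (dual_code G B) \<longrightarrow>
           short_code G (skew_supp G e) A = Kset G A B e)"
proof (intro conjI impI)
  note G = assms(1)
  show "Kset G A B (\<lambda>g. c g + e g) = Kset G A B e"
    using assms(5,6) by (rule Kset_add_orthogonal)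
  show short: "short_code G (skew_supp G e) A \<subseteq> Kset G A B e"
  proof
    fix a assume "a \<in> short_code G (skew_supp G e) A"
    then have "a \<in> A" "skew_comp_adj G e a = (\<lambda>_. 0)" by (simp_all add: short_code_supp_iff[OF G])
    then show "a \<in> Kset G A B e" by (simp add: Kset_iff[OF G] zero_in_dual_code)
  qed
  assume low_rank: "enat (skew_rank G e) < min_dist G (dual_code G B)"
  have "Kset G A B e \<subseteq> short_code G (skew_supp G e) A"
  proof
    fix a assume "a \<in> Kset G A B e"
    then have a: "a \<in> A" and dual: "skew_comp_adj G e a \<in> dual_code G B" by (simp_all add: Kset_iff[OF G])
    have "enat (skew_rank G (skew_comp_adj G e a)) < min_dist G (dual_code G B)"
      using skew_rank_comp_adj_le[OF G, of e a] low_rank by (meson enat_ord_simps(1) le_less_trans)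
    with dual have "skew_comp_adj G e a = (\<lambda>_. 0)" by (rule eq_0_if_rank_less_min_dist)
    with a show "a \<in> short_code G (skew_supp G e) A" by (simp add: short_code_supp_iff[OF G])
  qed
  with short show "short_code G (skew_supp G e) A = Kset G A B e" by blast
qed

end
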